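(* Let $E$ be a locally bounded or locally convex separable F-space with F-norm $\|\cdot\|$, and let $T:E\to E$ be an operator satisfying the Frequent Hypercyclicity Criterion with dense set $E_0$ and map $S:E_0\to E_0$. Let $(a_k)_{k\ge1}$ be a sequence of nonzero scalars and $(x_k)_{k\ge1}$ a dense sequence in $E_0$. Then there exists an increasing sequence $(n_k)_{k\ge1}$ of positive integers such that the series $x=\sum_{k\ge1}a_kS^{n_k}(x_k)$ converges in $E$ and $x$ is a supercyclic vector for $T$.
   Context: An F-space is a complete metrizable topological vector space; operator means continuous linear map. $T$ satisfies the Frequent Hypercyclicity Criterion if there exist a dense subset $E_0\subseteq E$ and a map $S:E_0\to E_0$ such that for every $x\in E_0$: (i) $\sum_{n\ge0}T^n(x)$ is unconditionally convergent, (ii) $\sum_{n\ge0}S^n(x)$ is unconditionally convergent, (iii) $TS(x)=x$. A vector $x$ is supercyclic for $T$ if $\{\lambda T^n(x): n\ge0,\lambda\in\mathbb{K}\}$ is dense in $E$. *)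

theory Defs
  imports Complex_Main "HOL-Library.Countable_Set"
begin

text \<open>
  The scalar field is a type 'k of class real_normed_field (in practice
  real or complex, K = R or C).  The F-space E is the whole of a type 'a which is a
  vector space over 'k via the scalar multiplication smul, and whose topology is the
  one induced by an F-norm N (metric d(x,y) = N (x - y)).
\<close>

definition F_norm :: "('k::real_normed_field \<Rightarrow> 'a::ab_group_add \<Rightarrow> 'a) \<Rightarrow> ('a \<Rightarrow> real) \<Rightarrow> bool" where
  "F_norm smul N \<longleftrightarrow>
     (\<forall>x. N x = 0 \<longleftrightarrow> x = 0) \<and>
     (\<forall>x. N x \<ge> 0) \<and>
     (\<forall>c x. norm c \<le> 1 \<longrightarrow> N (smul c x) \<le> N x) \<and>
     (\<forall>x y. N (x + y) \<le> N x + N y) \<and>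
     (\<forall>x. \<forall>\<epsilon>>0. \<exists>\<delta>>0. \<forall>c. norm c < \<delta> \<longrightarrow> N (smul c x) < \<epsilon>)"

definition Nconv :: "('a::ab_group_add \<Rightarrow> real) \<Rightarrow> (nat \<Rightarrow> 'a) \<Rightarrow> 'a \<Rightarrow> bool" where
  "Nconv N f L \<longleftrightarrow> (\<forall>\<epsilon>>0. \<exists>M. \<forall>m\<ge>M. N (f m - L) < \<epsilon>)"

definition Ncauchy :: "('a::ab_group_add \<Rightarrow> real) \<Rightarrow> (nat \<Rightarrow> 'a) \<Rightarrow> bool" where
  "Ncauchy N f \<longleftrightarrow> (\<forall>\<epsilon>>0. \<exists>M. \<forall>m\<ge>M. \<forall>n\<ge>M. N (f m - f n) < \<epsilon>)"

definition Ndense_in :: "('a::ab_group_add \<Rightarrow> real) \<Rightarrow> 'a set \<Rightarrow> 'a set \<Rightarrow> bool" where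
  "Ndense_in N D A \<longleftrightarrow> (\<forall>y\<in>A. \<forall>\<epsilon>>0. \<exists>d\<in>D. N (y - d) < \<epsilon>)"

definition F_space :: "('k::real_normed_field \<Rightarrow> 'a::ab_group_add \<Rightarrow> 'a) \<Rightarrow> ('a \<Rightarrow> real) \<Rightarrow> bool" where
  "F_space smul N \<longleftrightarrow> vector_space smul \<and> F_norm smul N \<and>
     (\<forall>f. Ncauchy N f \<longrightarrow> (\<exists>L. Nconv N f L))"

definition Nseparable :: "('a::ab_group_add \<Rightarrow> real) \<Rightarrow> bool" where
  "Nseparable N \<longleftrightarrow> (\<exists>D. countable D \<and> Ndense_in N D UNIV)"

definition Nball0 :: "('a::ab_group_add \<Rightarrow> real) \<Rightarrow> real \<Rightarrow> 'a set" where
  "Nball0 N r = {x. N x < r}"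

definition Nbounded :: "('k::real_normed_field \<Rightarrow> 'a::ab_group_add \<Rightarrow> 'a) \<Rightarrow> ('a \<Rightarrow> real) \<Rightarrow> 'a set \<Rightarrow> bool" where
  "Nbounded smul N B \<longleftrightarrow>
     (\<forall>U. (\<exists>r>0. Nball0 N r \<subseteq> U) \<longrightarrow> (\<exists>t>0. \<forall>c. norm c \<le> t \<longrightarrow> smul c ` B \<subseteq> U))"

definition locally_bounded :: "('k::real_normed_field \<Rightarrow> 'a::ab_group_add \<Rightarrow> 'a) \<Rightarrow> ('a \<Rightarrow> real) \<Rightarrow> bool" where
  "locally_bounded smul N \<longleftrightarrow> (\<exists>U. (\<exists>r>0. Nball0 N r \<subseteq> U) \<and> Nbounded smul N U)"

definition convex_set :: "('k::real_normed_field \<Rightarrow> 'a::ab_group_add \<Rightarrow> 'a) \<Rightarrow> 'a set \<Rightarrow> bool" where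
  "convex_set smul U \<longleftrightarrow>
     (\<forall>x\<in>U. \<forall>y\<in>U. \<forall>t::real. 0 \<le> t \<and> t \<le> 1 \<longrightarrow> smul (of_real t) x + smul (of_real (1 - t)) y \<in> U)"

definition locally_convex :: "('k::real_normed_field \<Rightarrow> 'a::ab_group_add \<Rightarrow> 'a) \<Rightarrow> ('a \<Rightarrow> real) \<Rightarrow> bool" where
  "locally_convex smul N \<longleftrightarrow>
     (\<forall>\<epsilon>>0. \<exists>U. convex_set smul U \<and> (\<exists>r>0. Nball0 N r \<subseteq> U) \<and> U \<subseteq> Nball0 N \<epsilon>)"

definition operator :: "('k::real_normed_field \<Rightarrow> 'a::ab_group_add \<Rightarrow> 'a) \<Rightarrow> ('a \<Rightarrow> real) \<Rightarrow> ('a \<Rightarrow> 'a) \<Rightarrow> bool" where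
  "operator smul N T \<longleftrightarrow> Vector_Spaces.linear smul smul T \<and>
     (\<forall>x. \<forall>\<epsilon>>0. \<exists>\<delta>>0. \<forall>y. N (y - x) < \<delta> \<longrightarrow> N (T y - T x) < \<epsilon>)"

definition uncond_convergent :: "('a::ab_group_add \<Rightarrow> real) \<Rightarrow> (nat \<Rightarrow> 'a) \<Rightarrow> bool" where
  "uncond_convergent N f \<longleftrightarrow>
     (\<forall>\<sigma>. bij \<sigma> \<longrightarrow> (\<exists>L. Nconv N (\<lambda>m. \<Sum>n<m. f (\<sigma> n)) L))"

definition FHC_with :: "('a::ab_group_add \<Rightarrow> real) \<Rightarrow> ('a \<Rightarrow> 'a) \<Rightarrow> 'a set \<Rightarrow> ('a \<Rightarrow> 'a) \<Rightarrow> bool" where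
  "FHC_with N T E0 S \<longleftrightarrow> Ndense_in N E0 UNIV \<and> S ` E0 \<subseteq> E0 \<and>
     (\<forall>x\<in>E0. uncond_convergent N (\<lambda>n. (T ^^ n) x) \<and>
             uncond_convergent N (\<lambda>n. (S ^^ n) x) \<and> T (S x) = x)"

definition supercyclic :: "('k::real_normed_field \<Rightarrow> 'a::ab_group_add \<Rightarrow> 'a) \<Rightarrow> ('a \<Rightarrow> real) \<Rightarrow> ('a \<Rightarrow> 'a) \<Rightarrow> 'a \<Rightarrow> bool" where
  "supercyclic smul N T x \<longleftrightarrow> Ndense_in N {smul c ((T ^^ n) x) | c n. True} UNIV"

end

theory Submission
  imports Defs
begin

text \<open>
  The exponents n_1 < n_2 < ... are chosen recursively. Since S-orbits of points of E0 tend
  to 0, n_j can be taken so large that a_j S^(n_j - n_i) x_j is tiny for every i < j; and since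
  T-orbits of points of E0 tend to 0, also so large that a_k T^(n_j - n_k) x_k is tiny for
  every k < j, even after multiplication by 1/a_j. Because T^(n_j) S^(n_j) x_j = x_j, applying
  T^(n_j) to the sum x of the series gives a_j x_j up to these two kinds of error, whence
  N(T^(n_j) x / a_j - x_j) < 1/j. Every point of E is close to x_j for arbitrarily large j, so
  the scalar multiples of the orbit of x are dense.
\<close>

lemma sum_power_half_greaterThanAtMost:
  "n \<le> m \<Longrightarrow> (\<Sum>k\<in>{n<..m}. (1/2::real)^k) = (1/2)^n - (1/2)^m"
proof (induction m rule: dec_induct)
  case (step m)
  then have "{n<..Suc m} = insert (Suc m) {n<..m}" by auto
  then show ?case using step by simp
qed simp

lemma finite_positive_lower_bound:
  fixes f :: "'b \<Rightarrow> real"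
  assumes "finite A" and "\<And>x. x \<in> A \<Longrightarrow> 0 < f x"
  shows "\<exists>d>0. \<forall>x\<in>A. d \<le> f x"
  by (rule exI[of _ "Min (insert 1 (f ` A))"]) (use assms in auto)

locale F_normed_space = vector_space smul
  for smul :: "'k::real_normed_field \<Rightarrow> 'a::ab_group_add \<Rightarrow> 'a" +
  fixes N :: "'a \<Rightarrow> real"
  assumes F_norm: "F_norm smul N"
begin

lemma N_eq_0_iff [simp]: "N x = 0 \<longleftrightarrow> x = 0"
  using F_norm unfolding F_norm_def by blast

lemma N_0 [simp]: "N 0 = 0"
  by simp

lemma N_nonneg: "N x \<ge> 0"
  using F_norm unfolding F_norm_def by blast

lemma N_scale_le: "norm c \<le> 1 \<Longrightarrow> N (smul c x) \<le> N x"
  using F_norm unfolding F_norm_def by blast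

lemma N_triangle: "N (x + y) \<le> N x + N y"
  using F_norm unfolding F_norm_def by blast

lemma N_scale_small: "\<epsilon> > 0 \<Longrightarrow> \<exists>\<delta>>0. \<forall>c. norm c < \<delta> \<longrightarrow> N (smul c x) < \<epsilon>"
  using F_norm unfolding F_norm_def by blast

lemma N_minus [simp]: "N (- x) = N x"
proof -
  have "N (- y) \<le> N y" for y
    using N_scale_le[of "-1" y] by simp
  from this[of x] this[of "- x"] show ?thesis by simp
qed

lemma N_commute: "N (x - y) = N (y - x)"
  by (metis N_minus minus_diff_eq)

lemma N_triangle_diff: "N (x - z) \<le> N (x - y) + N (y - z)"
  using N_triangle[of "x - y" "y - z"] by simp

lemma N_sum_le: "N (sum f A) \<le> (\<Sum>i\<in>A. N (f i))"
proof (induction A rule: infinite_finite_induct)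
  case (insert x F)
  then show ?case using N_triangle[of "f x" "sum f F"] by simp
qed simp_all

lemma N_scale_of_nat_le: "N (smul (of_nat m) x) \<le> of_nat m * N x"
proof (induction m)
  case (Suc m)
  have "smul (of_nat (Suc m)) x = smul (of_nat m) x + x"
    by (simp add: scale_left_distrib)
  then show ?case using N_triangle[of "smul (of_nat m) x" x] Suc by (simp add: algebra_simps)
qed simp

lemma N_scale_bounded: "\<exists>K>0. \<forall>x. N (smul c x) \<le> K * N x"
proof -
  define m :: nat where "m = nat \<lceil>norm c\<rceil> + 1"
  have m: "real m \<ge> 1" "norm c \<le> real m"
    unfolding m_def by linarith+
  define c' where "c' = c / of_nat m"
  have "norm c' \<le> 1"
    using m by (simp add: c'_def norm_divide)
  have c: "c = of_nat m * c'"
    using m by (simp add: c'_def)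
  have "N (smul c x) \<le> real m * N x" for x
  proof -
    have "N (smul c x) = N (smul (of_nat m) (smul c' x))"
      by (simp add: c)
    also have "\<dots> \<le> real m * N (smul c' x)"
      by (rule N_scale_of_nat_le)
    also have "\<dots> \<le> real m * N x"
      using N_scale_le[OF \<open>norm c' \<le> 1\<close>] by (simp add: mult_left_mono)
    finally show ?thesis .
  qed
  with m show ?thesis by (intro exI[of _ "real m"]) auto
qed

lemma Nconv_iff_tendsto: "Nconv N f L \<longleftrightarrow> (\<lambda>m. N (f m - L)) \<longlonglongrightarrow> 0"
  unfolding Nconv_def LIMSEQ_def dist_real_def using N_nonneg by simp

lemma tendsto_N_scale:
  assumes "(\<lambda>m. N (g m)) \<longlonglongrightarrow> 0"
  shows "(\<lambda>m. N (smul c (g m))) \<longlonglongrightarrow> 0"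
proof -
  obtain K where K: "\<And>x. N (smul c x) \<le> K * N x"
    using N_scale_bounded by blast
  show ?thesis
    by (rule tendsto_sandwich[OF _ _ tendsto_const tendsto_mult_right_zero[OF assms, of K]])
      (simp_all add: N_nonneg K)
qed

lemma uncond_convergent_terms_tendsto_0:
  assumes "uncond_convergent N f"
  shows "(\<lambda>m. N (f m)) \<longlonglongrightarrow> 0"
proof -
  define s where "s m = (\<Sum>n<m. f n)" for m
  obtain L where "Nconv N s L"
    using assms bij_id unfolding uncond_convergent_def s_def id_apply by blast
  then have lim: "(\<lambda>m. N (s m - L)) \<longlonglongrightarrow> 0"
    by (simp add: Nconv_iff_tendsto)
  have "N (f m) \<le> N (s (Suc m) - L) + N (s m - L)" for m
  proof -
    have "f m = s (Suc m) - s m"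
      by (simp add: s_def)
    then show ?thesis
      using N_triangle_diff[of "s (Suc m)" "s m" L] N_commute[of L "s m"] by simp
  qed
  then show ?thesis
    by (intro tendsto_sandwich[OF _ _ tendsto_const tendsto_add_zero[OF LIMSEQ_Suc[OF lim] lim]])
      (simp_all add: N_nonneg)
qed

lemma Ndense_in_trans:
  assumes "Ndense_in N D A" and "Ndense_in N A B"
  shows "Ndense_in N D B"
  unfolding Ndense_in_def
proof (intro ballI allI impI)
  fix y \<epsilon>
  assume "y \<in> B" and "(\<epsilon>::real) > 0"
  then obtain z where "z \<in> A" "N (y - z) < \<epsilon>/2"
    using assms(2) unfolding Ndense_in_def by (meson half_gt_zero)
  moreover obtain d where "d \<in> D" "N (z - d) < \<epsilon>/2"
    using assms(1) \<open>z \<in> A\<close> \<open>\<epsilon> > 0\<close> unfolding Ndense_in_def by (meson half_gt_zero)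
  ultimately show "\<exists>d\<in>D. N (y - d) < \<epsilon>"
    using N_triangle_diff[of y d z] by force
qed

lemma Ndense_in_UNIV_avoid_finite:
  fixes z :: 'a
  assumes dense: "Ndense_in N D UNIV" and "finite F" and "\<epsilon> > 0" and "z \<noteq> 0"
  shows "\<exists>d\<in>D - F. N (y - d) < \<epsilon>"
proof -
  obtain \<delta> where "\<delta> > 0" and \<delta>: "\<And>c. norm c < \<delta> \<Longrightarrow> N (smul c z) < \<epsilon>/2"
    using N_scale_small[of "\<epsilon>/2" z] \<open>\<epsilon> > 0\<close> by auto
  let ?line = "\<lambda>t::real. y + smul (of_real t) z"
  have "inj ?line"
    using \<open>z \<noteq> 0\<close> by (auto intro: injI)
  moreover have "infinite {0<..<\<delta>}"
    using \<open>\<delta> > 0\<close> by simp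
  ultimately have "infinite (?line ` {0<..<\<delta>})"
    by (metis finite_imageD inj_on_subset subset_UNIV)
  then have "\<not> ?line ` {0<..<\<delta>} \<subseteq> F"
    using \<open>finite F\<close> finite_subset by blast
  then obtain t where t: "t \<in> {0<..<\<delta>}" "?line t \<notin> F"
    by blast
  define y' where "y' = ?line t"
  have "N (y - y') < \<epsilon>/2"
    using \<delta>[of "of_real t"] t(1) by (simp add: y'_def)
  have pos: "0 < N (y' - f)" if "f \<in> F" for f
  proof -
    have "y' - f \<noteq> 0"
      using that t(2) unfolding y'_def by auto
    then show ?thesis
      using N_nonneg[of "y' - f"] by (simp add: order_less_le)
  qed
  obtain r where "r > 0" and r: "\<forall>f\<in>F. r \<le> N (y' - f)"
    using finite_positive_lower_bound[OF \<open>finite F\<close>, of "\<lambda>f. N (y' - f)"] pos by blast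
  have "min r (\<epsilon>/2) > 0"
    using \<open>r > 0\<close> \<open>\<epsilon> > 0\<close> by simp
  then obtain d where "d \<in> D" and d: "N (y' - d) < min r (\<epsilon>/2)"
    using dense unfolding Ndense_in_def by blast
  have "d \<notin> F"
  proof
    assume "d \<in> F"
    then have "r \<le> N (y' - d)"
      using r by blast
    then show False
      using d by simp
  qed
  moreover have "N (y - d) < \<epsilon>"
    using N_triangle_diff[of y d y'] \<open>N (y - y') < \<epsilon>/2\<close> d by simp
  ultimately show ?thesis using \<open>d \<in> D\<close> by blast
qed

lemma Ndense_in_UNIV_large_index:
  fixes f :: "nat \<Rightarrow> 'a"
  assumes "Ndense_in N (f ` {1..}) UNIV" and "\<epsilon> > 0"
  shows "\<exists>k\<ge>K. k \<ge> 1 \<and> N (y - f k) < \<epsilon>"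
proof (cases "\<exists>z::'a. z \<noteq> 0")
  case True
  then obtain z :: 'a where "z \<noteq> 0" ..
  have "finite (f ` {1..<K})"
    by simp
  from Ndense_in_UNIV_avoid_finite[OF assms(1) this assms(2) \<open>z \<noteq> 0\<close>, of y]
  obtain d where d: "d \<in> f ` {1..}" "d \<notin> f ` {1..<K}" "N (y - d) < \<epsilon>"
    by blast
  then obtain k where "k \<ge> 1" "d = f k"
    by auto
  moreover have "k \<ge> K"
    using d(2) \<open>d = f k\<close> \<open>k \<ge> 1\<close> by (meson atLeastLessThan_iff image_eqI not_le)
  ultimately show ?thesis
    using d(3) by blast
next
  case False
  then have "N (y - f (max K 1)) = 0"
    by simp
  then show ?thesis
    using \<open>\<epsilon> > 0\<close> by (intro exI[of _ "max K 1"]) simp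
qed

end

locale supercyclic_series_setting = F_normed_space smul N
  for smul :: "'k::real_normed_field \<Rightarrow> 'a::ab_group_add \<Rightarrow> 'a" and N :: "'a \<Rightarrow> real" +
  fixes T S :: "'a \<Rightarrow> 'a" and E0 :: "'a set" and a :: "nat \<Rightarrow> 'k" and xs :: "nat \<Rightarrow> 'a"
  assumes complete: "\<And>f. Ncauchy N f \<Longrightarrow> \<exists>L. Nconv N f L"
    and operator: "operator smul N T"
    and S_E0: "x \<in> E0 \<Longrightarrow> S x \<in> E0"
    and T_S: "x \<in> E0 \<Longrightarrow> T (S x) = x"
    and T_orbit_null: "x \<in> E0 \<Longrightarrow> (\<lambda>m. N ((T ^^ m) x)) \<longlonglongrightarrow> 0"
    and S_orbit_null: "x \<in> E0 \<Longrightarrow> (\<lambda>m. N ((S ^^ m) x)) \<longlonglongrightarrow> 0"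
    and a_nonzero: "k \<ge> 1 \<Longrightarrow> a k \<noteq> 0"
    and xs_E0: "k \<ge> 1 \<Longrightarrow> xs k \<in> E0"
    and xs_dense: "Ndense_in N (xs ` {1..}) UNIV"
begin

lemma module_hom_T_iterate: "module_hom smul smul (T ^^ n)"
proof (induction n)
  case 0
  show ?case by (simp add: module_hom_iff module_axioms)
next
  case (Suc n)
  have "module_hom smul smul T"
    using operator by (simp add: operator_def module_hom_iff_linear)
  with Suc show ?case
    using module_hom_compose by (fastforce simp: comp_def)
qed

lemma T_iterate_add: "(T ^^ n) (x + y) = (T ^^ n) x + (T ^^ n) y"
  by (rule module_hom.add[OF module_hom_T_iterate])

lemma T_iterate_scale: "(T ^^ n) (smul c x) = smul c ((T ^^ n) x)"
  by (rule module_hom.scale[OF module_hom_T_iterate])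

lemma T_iterate_sum: "(T ^^ n) (sum f A) = (\<Sum>i\<in>A. (T ^^ n) (f i))"
  by (rule module_hom.sum[OF module_hom_T_iterate])

lemma Nconv_T:
  assumes "Nconv N f L"
  shows "Nconv N (\<lambda>m. T (f m)) (T L)"
  unfolding Nconv_def
proof (intro allI impI)
  fix \<epsilon> :: real
  assume "\<epsilon> > 0"
  then obtain \<delta> where "\<delta> > 0" and \<delta>: "\<And>y. N (y - L) < \<delta> \<Longrightarrow> N (T y - T L) < \<epsilon>"
    using operator unfolding operator_def by blast
  then show "\<exists>M. \<forall>m\<ge>M. N (T (f m) - T L) < \<epsilon>"
    using assms unfolding Nconv_def by blast
qed

lemma Nconv_T_iterate: "Nconv N f L \<Longrightarrow> Nconv N (\<lambda>m. (T ^^ n) (f m)) ((T ^^ n) L)"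
  by (induction n) (simp_all add: Nconv_T)

lemma S_iterate_E0: "x \<in> E0 \<Longrightarrow> (S ^^ n) x \<in> E0"
  by (induction n) (simp_all add: S_E0)

lemma T_iterate_S_iterate: "x \<in> E0 \<Longrightarrow> (T ^^ n) ((S ^^ n) x) = x"
proof (induction n)
  case (Suc n)
  have "(T ^^ Suc n) ((S ^^ Suc n) x) = (T ^^ n) (T (S ((S ^^ n) x)))"
    by (simp add: funpow_Suc_right funpow_swap1 del: funpow.simps)
  also have "\<dots> = x"
    using Suc by (simp add: T_S S_iterate_E0)
  finally show ?case .
qed simp

lemma T_iterate_S_iterate_le: "x \<in> E0 \<Longrightarrow> q \<le> p \<Longrightarrow> (T ^^ p) ((S ^^ q) x) = (T ^^ (p - q)) x"
  using funpow_add[of "p - q" q T] by (simp add: T_iterate_S_iterate)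

lemma T_iterate_S_iterate_ge: "x \<in> E0 \<Longrightarrow> p \<le> q \<Longrightarrow> (T ^^ p) ((S ^^ q) x) = (S ^^ (q - p)) x"
  using funpow_add[of p "q - p" S] by (simp add: T_iterate_S_iterate S_iterate_E0)

definition inverse_scale_bound :: "nat \<Rightarrow> real" where
  "inverse_scale_bound j = (SOME K. K > 0 \<and> (\<forall>x. N (smul (inverse (a j)) x) \<le> K * N x))"

lemma inverse_scale_bound:
  "inverse_scale_bound j > 0" "N (smul (inverse (a j)) x) \<le> inverse_scale_bound j * N x"
  using someI_ex[OF N_scale_bounded[of "inverse (a j)"]] unfolding inverse_scale_bound_def by blast+

definition tolerance :: "nat \<Rightarrow> real" where
  "tolerance i = (if i = 0 then 1 else 1 / (2 * real i * inverse_scale_bound i))"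

lemma tolerance_pos: "tolerance i > 0"
  unfolding tolerance_def using inverse_scale_bound(1)[of i] by auto

text \<open>
  m is an admissible value of n_j when n_i = p i for i < j: the j-th term is negligible after
  applying T^(n_i), and the earlier terms are negligible after applying T^m and dividing by a_j.
\<close>

definition admissible :: "nat \<Rightarrow> (nat \<Rightarrow> nat) \<Rightarrow> nat \<Rightarrow> bool" where
  "admissible j p m \<longleftrightarrow> p (j - 1) < m \<and>
     (\<forall>i<j. N (smul (a j) ((S ^^ (m - p i)) (xs j))) < tolerance i * (1/2)^j) \<and>
     inverse_scale_bound j * (\<Sum>k\<in>{1..<j}. N (smul (a k) ((T ^^ (m - p k)) (xs k)))) < 1 / (2 * real j)"

lemma admissible_cong:
  assumes "\<And>i. i < j \<Longrightarrow> p i = p' i" and "j \<ge> 1"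
  shows "admissible j p m = admissible j p' m"
proof -
  have "(\<Sum>k\<in>{1..<j}. N (smul (a k) ((T ^^ (m - p k)) (xs k))))
      = (\<Sum>k\<in>{1..<j}. N (smul (a k) ((T ^^ (m - p' k)) (xs k))))"
    using assms(1) by (intro sum.cong) auto
  then show ?thesis
    unfolding admissible_def using assms by auto
qed

lemma eventually_admissible:
  assumes "j \<ge> 1"
  shows "eventually (admissible j p) sequentially"
proof -
  have shifted_null: "(\<lambda>m. N (smul c ((R ^^ (m - q)) x))) \<longlonglongrightarrow> 0"
    if "(\<lambda>m. N ((R ^^ m) x)) \<longlonglongrightarrow> 0" for R :: "'a \<Rightarrow> 'a" and c q x
    using filterlim_compose[OF that filterlim_minus_const_nat_at_top, of q]
    by (intro tendsto_N_scale) (simp add: o_def)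
  have "\<forall>\<^sub>F m in sequentially. \<forall>i\<in>{..<j}. N (smul (a j) ((S ^^ (m - p i)) (xs j))) < tolerance i * (1/2)^j"
    using assms
    by (intro eventually_ball_finite ballI order_tendstoD(2)[OF shifted_null])
      (simp_all add: S_orbit_null xs_E0 tolerance_pos)
  moreover have "(\<lambda>m. inverse_scale_bound j * (\<Sum>k\<in>{1..<j}. N (smul (a k) ((T ^^ (m - p k)) (xs k))))) \<longlonglongrightarrow> 0"
    by (intro tendsto_mult_right_zero tendsto_null_sum shifted_null) (simp add: T_orbit_null xs_E0)
  then have "\<forall>\<^sub>F m in sequentially.
      inverse_scale_bound j * (\<Sum>k\<in>{1..<j}. N (smul (a k) ((T ^^ (m - p k)) (xs k)))) < 1 / (2 * real j)"
    by (rule order_tendstoD(2)) (use assms in simp)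
  ultimately show ?thesis
    using eventually_gt_at_top[of "p (j - 1)"] unfolding admissible_def
    by eventually_elim auto
qed

lemma admissible_sequence_exists: "\<exists>n. n 0 = 0 \<and> (\<forall>j\<ge>1. admissible j n (n j))"
proof -
  define P where "P p j m \<longleftrightarrow> (if j = 0 then m = 0 else admissible j p m)" for p j m
  have "P p j m = P p' j m" if "\<And>i. (i, j) \<in> less_than \<Longrightarrow> p i = p' i" for p p' j m
    using that admissible_cong[of j p p' m] by (simp add: P_def)
  moreover have "\<exists>m. P p j m" for p j
    using eventually_admissible[of j p] by (cases "j = 0") (auto simp: P_def eventually_sequentially)
  ultimately obtain n where "\<forall>j. P n j (n j)"
    using dependent_wf_choice[OF wf_less_than, where P = P] by blast
  then show ?thesis
    by (metis P_def not_one_le_zero)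
qed

end

locale admissible_exponents = supercyclic_series_setting smul N T S E0 a xs
  for smul :: "'k::real_normed_field \<Rightarrow> 'a::ab_group_add \<Rightarrow> 'a" and N T S E0 a xs +
  fixes n :: "nat \<Rightarrow> nat"
  assumes n_0: "n 0 = 0"
    and n_admissible: "\<And>j. j \<ge> 1 \<Longrightarrow> admissible j n (n j)"
begin

lemma strict_mono_n: "strict_mono n"
proof (rule strict_mono_Suc_iff[THEN iffD2], intro allI)
  show "n j < n (Suc j)" for j
    using n_admissible[of "Suc j"] by (simp add: admissible_def)
qed

lemma later_term_small:
  "i < k \<Longrightarrow> N (smul (a k) ((S ^^ (n k - n i)) (xs k))) < tolerance i * (1/2)^k"
  using n_admissible[of k] unfolding admissible_def by auto

lemma earlier_terms_small:
  "j \<ge> 1 \<Longrightarrow> inverse_scale_bound j * (\<Sum>k\<in>{1..<j}. N (smul (a k) ((T ^^ (n j - n k)) (xs k))))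
     < 1 / (2 * real j)"
  using n_admissible[of j] unfolding admissible_def by auto

definition series_term where
  "series_term k = smul (a k) ((S ^^ n k) (xs k))"

definition partial_sum where
  "partial_sum m = (\<Sum>k\<in>{1..m}. series_term k)"

lemma partial_sum_diff: "q \<le> m \<Longrightarrow> partial_sum m - partial_sum q = (\<Sum>k\<in>{q<..m}. series_term k)"
proof (induction m rule: dec_induct)
  case (step m)
  have "{q<..Suc m} = insert (Suc m) {q<..m}" "{1..Suc m} = insert (Suc m) {1..m}"
    using step by auto
  then show ?case using step by (simp add: partial_sum_def)
qed simp

lemma N_partial_sum_diff_le: "q \<le> m \<Longrightarrow> N (partial_sum m - partial_sum q) \<le> (1/2)^q"
proof -
  assume "q \<le> m"
  have "N (partial_sum m - partial_sum q) \<le> (\<Sum>k\<in>{q<..m}. N (series_term k))"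
    unfolding partial_sum_diff[OF \<open>q \<le> m\<close>] by (rule N_sum_le)
  also have "\<dots> \<le> (\<Sum>k\<in>{q<..m}. (1/2::real)^k)"
    using later_term_small[of 0] by (intro sum_mono less_imp_le) (simp add: series_term_def n_0 tolerance_def)
  also have "\<dots> \<le> (1/2)^q"
    by (simp add: sum_power_half_greaterThanAtMost[OF \<open>q \<le> m\<close>])
  finally show ?thesis .
qed

lemma partial_sum_converges: "\<exists>x. Nconv N partial_sum x"
proof (rule complete, unfold Ncauchy_def, intro allI impI)
  fix \<epsilon> :: real
  assume "\<epsilon> > 0"
  then obtain M where M: "(1/2::real)^M < \<epsilon>"
    using real_arch_pow_inv[of \<epsilon> "1/2"] by auto
  have "N (partial_sum m - partial_sum q) < \<epsilon>" if "min m q \<ge> M" for m q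
  proof -
    have "N (partial_sum m - partial_sum q) \<le> (1/2)^min m q"
    proof (cases "q \<le> m")
      case False
      then show ?thesis
        using N_partial_sum_diff_le[of m q] N_commute[of "partial_sum m"] by simp
    qed (simp add: N_partial_sum_diff_le)
    also have "\<dots> \<le> (1/2)^M"
      using that by (simp add: power_decreasing)
    finally show ?thesis using M by simp
  qed
  then show "\<exists>M. \<forall>m\<ge>M. \<forall>q\<ge>M. N (partial_sum m - partial_sum q) < \<epsilon>"
    by auto
qed

definition orbit_head where
  "orbit_head j = (\<Sum>k\<in>{1..<j}. smul (a k) ((T ^^ (n j - n k)) (xs k)))"

definition orbit_tail where
  "orbit_tail j m = (\<Sum>k\<in>{j<..m}. smul (a k) ((S ^^ (n k - n j)) (xs k)))"

lemma T_iterate_partial_sum: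
  assumes "j \<ge> 1" and "j \<le> m"
  shows "(T ^^ n j) (partial_sum m) = orbit_head j + smul (a j) (xs j) + orbit_tail j m"
proof -
  have "{1..j} = insert j {1..<j}"
    using assms(1) by auto
  then have "partial_sum m = (\<Sum>k\<in>{1..<j}. series_term k) + series_term j + (\<Sum>k\<in>{j<..m}. series_term k)"
    using partial_sum_diff[OF assms(2)] by (simp add: partial_sum_def algebra_simps)
  moreover have "(T ^^ n j) (\<Sum>k\<in>{1..<j}. series_term k) = orbit_head j"
    unfolding T_iterate_sum orbit_head_def series_term_def T_iterate_scale
    by (intro sum.cong refl) (simp add: T_iterate_S_iterate_le xs_E0 strict_mono_less_eq[OF strict_mono_n])
  moreover have "(T ^^ n j) (series_term j) = smul (a j) (xs j)"
    using assms(1) by (simp add: series_term_def T_iterate_scale T_iterate_S_iterate xs_E0)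
  moreover have "(T ^^ n j) (\<Sum>k\<in>{j<..m}. series_term k) = orbit_tail j m"
    unfolding T_iterate_sum orbit_tail_def series_term_def T_iterate_scale
    using assms(1)
    by (intro sum.cong refl) (simp add: T_iterate_S_iterate_ge xs_E0 strict_mono_less_eq[OF strict_mono_n])
  ultimately show ?thesis by (simp add: T_iterate_add)
qed

lemma N_orbit_tail_le: "N (orbit_tail j m) \<le> tolerance j * (1/2)^j"
proof (cases "j \<le> m")
  case True
  have "N (orbit_tail j m) \<le> (\<Sum>k\<in>{j<..m}. N (smul (a k) ((S ^^ (n k - n j)) (xs k))))"
    unfolding orbit_tail_def by (rule N_sum_le)
  also have "\<dots> \<le> (\<Sum>k\<in>{j<..m}. tolerance j * (1/2)^k)"
    by (intro sum_mono less_imp_le later_term_small) simp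
  also have "\<dots> \<le> tolerance j * (1/2)^j"
    using tolerance_pos[of j]
    by (simp add: sum_distrib_left[symmetric] sum_power_half_greaterThanAtMost[OF True])
  finally show ?thesis .
next
  case False
  then show ?thesis using tolerance_pos[of j] by (simp add: orbit_tail_def)
qed

lemma N_T_iterate_limit_minus_head:
  assumes "j \<ge> 1" and x: "Nconv N partial_sum x"
  shows "N ((T ^^ n j) x - orbit_head j - smul (a j) (xs j)) \<le> tolerance j * (1/2)^j"
proof (rule field_le_epsilon)
  fix \<epsilon> :: real
  assume "\<epsilon> > 0"
  then obtain M where M: "\<And>m. m \<ge> M \<Longrightarrow> N ((T ^^ n j) (partial_sum m) - (T ^^ n j) x) < \<epsilon>"
    using Nconv_T_iterate[OF x, of "n j"] unfolding Nconv_def by blast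
  define m where "m = max M j"
  have "(T ^^ n j) x - orbit_head j - smul (a j) (xs j)
      = ((T ^^ n j) x - (T ^^ n j) (partial_sum m)) + orbit_tail j m"
    using T_iterate_partial_sum[OF assms(1), of m] by (simp add: m_def algebra_simps)
  then have "N ((T ^^ n j) x - orbit_head j - smul (a j) (xs j))
      \<le> N ((T ^^ n j) x - (T ^^ n j) (partial_sum m)) + N (orbit_tail j m)"
    by (simp only: N_triangle)
  also have "\<dots> \<le> \<epsilon> + tolerance j * (1/2)^j"
    using M[of m] N_orbit_tail_le[of j m] N_commute[of "(T ^^ n j) x"] by (simp add: m_def)
  finally show "N ((T ^^ n j) x - orbit_head j - smul (a j) (xs j)) \<le> tolerance j * (1/2)^j + \<epsilon>"
    by simp
qed

lemma orbit_approximates_xs: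
  assumes "j \<ge> 1" and x: "Nconv N partial_sum x"
  shows "N (xs j - smul (inverse (a j)) ((T ^^ n j) x)) < 1 / real j"
proof -
  define D where "D = (T ^^ n j) x - orbit_head j - smul (a j) (xs j)"
  let ?K = "inverse_scale_bound j"
  have "smul (inverse (a j)) ((T ^^ n j) x) - xs j = smul (inverse (a j)) (orbit_head j + D)"
    using a_nonzero[OF assms(1)] by (simp add: D_def scale_right_distrib scale_right_diff_distrib)
  then have "N (xs j - smul (inverse (a j)) ((T ^^ n j) x)) \<le> ?K * N (orbit_head j + D)"
    using inverse_scale_bound(2) N_commute[of "xs j"] by simp
  also have "\<dots> \<le> ?K * (\<Sum>k\<in>{1..<j}. N (smul (a k) ((T ^^ (n j - n k)) (xs k)))) + ?K * N D"
  proof -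
    have "N (orbit_head j + D) \<le> (\<Sum>k\<in>{1..<j}. N (smul (a k) ((T ^^ (n j - n k)) (xs k)))) + N D"
      using N_triangle[of "orbit_head j" D] N_sum_le[of "\<lambda>k. smul (a k) ((T ^^ (n j - n k)) (xs k))" "{1..<j}"]
      unfolding orbit_head_def by linarith
    then show ?thesis
      using inverse_scale_bound(1)[of j] by (simp add: distrib_left[symmetric] mult_left_mono)
  qed
  also have "\<dots> < 1 / (2 * real j) + 1 / (2 * real j)"
  proof -
    have "?K * N D \<le> ?K * (tolerance j * (1/2)^j)"
      using N_T_iterate_limit_minus_head[OF assms] inverse_scale_bound(1)[of j]
      by (simp add: D_def mult_left_mono)
    also have "\<dots> \<le> 1 / (2 * real j)"
      using assms(1) inverse_scale_bound(1)[of j]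
      by (simp add: tolerance_def divide_right_mono power_le_one)
    finally show ?thesis using earlier_terms_small[OF assms(1)] by simp
  qed
  finally show ?thesis by simp
qed

lemma supercyclic_limit:
  assumes x: "Nconv N partial_sum x"
  shows "supercyclic smul N T x"
  unfolding supercyclic_def Ndense_in_def
proof (intro ballI allI impI)
  fix y and \<epsilon> :: real
  assume "\<epsilon> > 0"
  then obtain K where K: "inverse (real (Suc K)) < \<epsilon>/2"
    using reals_Archimedean[of "\<epsilon>/2"] by auto
  obtain k where k: "k \<ge> Suc K" "N (y - xs k) < \<epsilon>/2"
    using Ndense_in_UNIV_large_index[OF xs_dense, of "\<epsilon>/2" "Suc K" y] \<open>\<epsilon> > 0\<close> by auto
  have "1 / real k \<le> inverse (real (Suc K))"
    using k(1) by (simp add: inverse_eq_divide frac_le)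
  then have "N (xs k - smul (inverse (a k)) ((T ^^ n k) x)) < \<epsilon>/2"
    using orbit_approximates_xs[OF _ x, of k] k(1) K by simp
  then have "N (y - smul (inverse (a k)) ((T ^^ n k) x)) < \<epsilon>"
    using N_triangle_diff[of y "smul (inverse (a k)) ((T ^^ n k) x)" "xs k"] k(2) by linarith
  then show "\<exists>d\<in>{smul c ((T ^^ n) x) |c n. True}. N (y - d) < \<epsilon>"
    by blast
qed

end

context supercyclic_series_setting
begin

theorem exists_supercyclic_series:
  "\<exists>n :: nat \<Rightarrow> nat. strict_mono_on {1..} n \<and> (\<forall>k\<ge>1. n k > 0) \<and>
     (\<exists>x. Nconv N (\<lambda>m. \<Sum>k\<in>{1..m}. smul (a k) ((S ^^ n k) (xs k))) x \<and>
          supercyclic smul N T x)"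
proof -
  obtain n where n: "n 0 = 0" "\<And>j. j \<ge> 1 \<Longrightarrow> admissible j n (n j)"
    using admissible_sequence_exists by blast
  interpret admissible_exponents smul N T S E0 a xs n
    using n by unfold_locales
  obtain x where x: "Nconv N partial_sum x"
    using partial_sum_converges by blast
  have "partial_sum = (\<lambda>m. \<Sum>k\<in>{1..m}. smul (a k) ((S ^^ n k) (xs k)))"
    by (simp add: fun_eq_iff partial_sum_def series_term_def)
  moreover have "n k > 0" if "k \<ge> 1" for k
    using strict_mono_less[OF strict_mono_n, of 0 k] that n(1) by simp
  ultimately show ?thesis
    using strict_mono_n x supercyclic_limit[OF x]
    by (intro exI[of _ n] exI[of _ x] conjI) (auto simp: strict_mono_on_def strict_mono_def)
qed

end

theorem mainTheorem4:
  fixes smul :: "'k::real_normed_field \<Rightarrow> 'a::ab_group_add \<Rightarrow> 'a"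
    and N :: "'a \<Rightarrow> real"
    and T S :: "'a \<Rightarrow> 'a"
    and E0 :: "'a set"
    and a :: "nat \<Rightarrow> 'k"
    and xs :: "nat \<Rightarrow> 'a"
  assumes "F_space smul N"
    and "Nseparable N"
    and "locally_bounded smul N \<or> locally_convex smul N"
    and "operator smul N T"
    and "FHC_with N T E0 S"
    and "\<forall>k\<ge>1. a k \<noteq> 0"
    and "\<forall>k\<ge>1. xs k \<in> E0"
    and "Ndense_in N (xs ` {1..}) E0"
  shows "\<exists>n :: nat \<Rightarrow> nat. strict_mono_on {1..} n \<and> (\<forall>k\<ge>1. n k > 0) \<and>
           (\<exists>x. Nconv N (\<lambda>m. \<Sum>k\<in>{1..m}. smul (a k) ((S ^^ n k) (xs k))) x \<and>
                supercyclic smul N T x)"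
proof -
  interpret F_normed_space smul N
    using assms(1) by (simp add: F_space_def F_normed_space_def F_normed_space_axioms_def)
  have "supercyclic_series_setting smul N T S E0 a xs"
  proof unfold_locales
    show "Ndense_in N (xs ` {1..}) UNIV"
      using Ndense_in_trans[OF assms(8)] assms(5) unfolding FHC_with_def by blast
  qed (use assms uncond_convergent_terms_tendsto_0 in \<open>auto simp: F_space_def FHC_with_def\<close>)
  then show ?thesis by (rule supercyclic_series_setting.exists_supercyclic_series)
qed

end
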